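(* Let $d\ge 1$ and $L\ge 1$ be integers, and for $1\le i,j\le d$ and $0\le \ell\le L$ let $P_i(x,u)$ and $Q_{i,j,\ell}(x,u)$ be polynomials in $x,u$ with nonnegative coefficients. Let $F_1(x,u),\dots,F_d(x,u)$ be formal power series in $x,u$ forming a solution of the positive linear system of catalytic equations \[ F_i(x,u) = P_i(x,u) + x\sum_{j=1}^d\sum_{\ell=0}^L Q_{i,j,\ell}(x,u)\,\Delta^\ell F_j(x,u),\qquad 1\le i\le d, \] and write $F_i(x,u)=\sum_{k\ge0}F_{i;k}(x)u^k$. Then for every $1\le i\le d$ and every $k\ge 0$ the power series $F_{i;k}(x)$ corresponds to a finite grammar.
   Context: For a power series $G(x,u)=\sum_{k\ge0}G_k(x)u^k$ and an integer $\ell\ge1$, the $\ell$-th difference is $\Delta^\ell G(x,u)=\bigl(G(x,u)-G_0(x)-G_1(x)u-\cdots-G_{\ell-1}(x)u^{\ell-1}\bigr)/u^\ell=\sum_{k\ge0}G_{k+\ell}(x)u^k$, and $\Delta^0G=G$. A power series $F(x)$ is said to correspond to a finite grammar (or to satisfy a positive polynomial system) if there exist $m\ge1$ and polynomials $R_1,\dots,R_m$ in $x,y_1,\dots,y_m$ with nonnegative coefficients such that the system $y_r=R_r(x,y_1,\dots,y_m)$, $1\le r\le m$, has a unique power series solution $(y_1(x),\dots,y_m(x))$ and $F(x)=y_1(x)$. *)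

theory Defs
  imports "HOL-Computational_Algebra.Formal_Power_Series"
begin

text \<open>Bivariate formal power series in x,u are represented as real fps fps:
  the outer variable is u, and the k-th outer coefficient is the series F_k(x).\<close>

definition Delta :: "nat \<Rightarrow> 'a::comm_ring_1 fps fps \<Rightarrow> 'a fps fps" where
  "Delta l G = fps_shift l G"

definition nonneg_bipoly :: "real fps fps \<Rightarrow> bool" where
  "nonneg_bipoly p \<longleftrightarrow>
     (\<forall>k n. fps_nth (fps_nth p k) n \<ge> 0) \<and>
     (\<exists>N. \<forall>k n. (N < k \<or> N < n) \<longrightarrow> fps_nth (fps_nth p k) n = 0)"

text \<open>A multivariate polynomial in x, y_0, ..., y_{m-1}: a coefficient function on
  monomials (a, e), standing for x^a * prod_i y_i^(e i), with finite support.\<close>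
definition nonneg_mpoly :: "nat \<Rightarrow> ((nat \<times> (nat \<Rightarrow> nat)) \<Rightarrow> real) \<Rightarrow> bool" where
  "nonneg_mpoly m R \<longleftrightarrow>
     finite {mn. R mn \<noteq> 0} \<and> (\<forall>mn. R mn \<ge> 0) \<and>
     (\<forall>mn. R mn \<noteq> 0 \<longrightarrow> (\<forall>i\<ge>m. snd mn i = 0))"

definition eval_mpoly :: "((nat \<times> (nat \<Rightarrow> nat)) \<Rightarrow> real) \<Rightarrow> real fps list \<Rightarrow> real fps" where
  "eval_mpoly R ys =
     (\<Sum>mn\<in>{mn. R mn \<noteq> 0}. fps_const (R mn) * fps_X ^ fst mn *
        (\<Prod>i<length ys. (ys ! i) ^ snd mn i))"

definition is_solution :: "((nat \<times> (nat \<Rightarrow> nat)) \<Rightarrow> real) list \<Rightarrow> real fps list \<Rightarrow> bool" where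
  "is_solution Rs ys \<longleftrightarrow> length ys = length Rs \<and>
     (\<forall>r<length Rs. ys ! r = eval_mpoly (Rs ! r) ys)"

definition finite_grammar :: "real fps \<Rightarrow> bool" where
  "finite_grammar F \<longleftrightarrow>
     (\<exists>m\<ge>1. \<exists>Rs. length Rs = m \<and> (\<forall>r<m. nonneg_mpoly m (Rs ! r)) \<and>
        (\<exists>ys. is_solution Rs ys \<and> (\<forall>ys'. is_solution Rs ys' \<longrightarrow> ys' = ys) \<and> F = ys ! 0))"

end

theory Submission
  imports Defs "HOL-Library.Product_Lexorder"
begin

text \<open>Write \<open>F(i,k)\<close> for the coefficient of \<open>u\<^sup>k\<close> in \<open>F\<^sub>i\<close> and \<open>q(i,j,l,a)\<close> for that of \<open>u\<^sup>a\<close>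
  in \<open>Q\<^sub>i\<^sub>j\<^sub>l\<close>. Extracting coefficients turns the catalytic system into the infinite system
  \<open>F(i,k) = P(i,k) + x \<Sum> q(i,j,l,a) F(j, k - a + l)\<close>, whose solution is unique because every
  unknown on the right is multiplied by \<open>x\<close>. Read \<open>k\<close> as the height of a walk with steps
  \<open>l - a \<in> [-N, L]\<close>, where \<open>N\<close> bounds all degrees of the data, and fix \<open>H > max N k\<^sub>0\<close>.
  Decomposing at the first visit below \<open>H\<close> gives \<open>F(i,n) = \<Sum> V(i, n - H, j, r) F(j, H - r)\<close> for
  \<open>n \<ge> H\<close>, where \<open>V(i,s,j,r)\<close> is the generating function of first exits from height \<open>s\<close> to
  height \<open>-r\<close>. The exits from the heights \<open>s \<le> L\<close> satisfy a finite positive system of their own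
  (first-step decomposition); together with the equations for \<open>F(i,k)\<close>, \<open>k < H\<close>, they form a
  finite positive polynomial system in which every variable is guarded by \<open>x\<close>, so it has exactly
  one solution. Conversely, any solution of the finite system rebuilds, through the exit
  decomposition, a solution of the infinite system, which must be the true coefficient family.\<close>

unbundle fps_syntax

section \<open>Polynomial expressions\<close>

datatype 'v pexp = PC "real fps" nat | PV 'v | PAdd "'v pexp" "'v pexp"
  | PMul "'v pexp" "'v pexp" | PX "'v pexp"

text \<open>\<^term>\<open>PC p n\<close> stands for the truncation of \<open>p\<close> to degree \<open>n\<close>, so that every expression
  denotes a polynomial in \<open>x\<close> and the variables.\<close>

primrec peval :: "('v \<Rightarrow> real fps) \<Rightarrow> 'v pexp \<Rightarrow> real fps" where
  "peval f (PC p n) = (\<Sum>b\<le>n. fps_const (p $ b) * fps_X ^ b)"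
| "peval f (PV v) = f v"
| "peval f (PAdd a b) = peval f a + peval f b"
| "peval f (PMul a b) = peval f a * peval f b"
| "peval f (PX a) = fps_X * peval f a"

primrec pvars :: "'v pexp \<Rightarrow> 'v set" where
  "pvars (PC p n) = {}"
| "pvars (PV v) = {v}"
| "pvars (PAdd a b) = pvars a \<union> pvars b"
| "pvars (PMul a b) = pvars a \<union> pvars b"
| "pvars (PX a) = pvars a"

primrec nonneg_coeffs :: "'v pexp \<Rightarrow> bool" where
  "nonneg_coeffs (PC p n) = (\<forall>b\<le>n. p $ b \<ge> 0)"
| "nonneg_coeffs (PV v) = True"
| "nonneg_coeffs (PAdd a b) = (nonneg_coeffs a \<and> nonneg_coeffs b)"
| "nonneg_coeffs (PMul a b) = (nonneg_coeffs a \<and> nonneg_coeffs b)"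
| "nonneg_coeffs (PX a) = nonneg_coeffs a"

primrec has_x_factor :: "'v pexp \<Rightarrow> bool" where
  "has_x_factor (PC p n) = False"
| "has_x_factor (PV v) = False"
| "has_x_factor (PAdd a b) = (has_x_factor a \<and> has_x_factor b)"
| "has_x_factor (PMul a b) = (has_x_factor a \<or> has_x_factor b)"
| "has_x_factor (PX a) = True"

text \<open>In a guarded expression every occurrence of a variable is multiplied by \<open>x\<close>, so the first
  \<open>m + 1\<close> coefficients of its value only depend on the first \<open>m\<close> coefficients of the variables.\<close>

primrec guarded :: "'v pexp \<Rightarrow> bool" where
  "guarded (PC p n) = True"
| "guarded (PV v) = False"
| "guarded (PAdd a b) = (guarded a \<and> guarded b)"
| "guarded (PMul a b) = ((guarded a \<and> guarded b) \<or> has_x_factor a \<or> has_x_factor b)"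
| "guarded (PX a) = True"

primrec psubst :: "('v \<Rightarrow> 'w pexp) \<Rightarrow> 'v pexp \<Rightarrow> 'w pexp" where
  "psubst \<sigma> (PC p n) = PC p n"
| "psubst \<sigma> (PV v) = \<sigma> v"
| "psubst \<sigma> (PAdd a b) = PAdd (psubst \<sigma> a) (psubst \<sigma> b)"
| "psubst \<sigma> (PMul a b) = PMul (psubst \<sigma> a) (psubst \<sigma> b)"
| "psubst \<sigma> (PX a) = PX (psubst \<sigma> a)"

definition psum :: "'a::linorder set \<Rightarrow> ('a \<Rightarrow> 'v pexp) \<Rightarrow> 'v pexp" where
  "psum A g = foldr (\<lambda>x. PAdd (g x)) (sorted_list_of_set A) (PC 0 0)"

lemma has_x_factor_imp_guarded: "has_x_factor e \<Longrightarrow> guarded e"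
  by (induction e) auto

lemma peval_nth_0_if_has_x_factor: "has_x_factor e \<Longrightarrow> peval f e $ 0 = 0"
  by (induction e) auto

lemma peval_cong: "(\<And>v. v \<in> pvars e \<Longrightarrow> f v = g v) \<Longrightarrow> peval f e = peval g e"
  by (induction e) auto

lemma peval_psubst: "peval f (psubst \<sigma> e) = peval (\<lambda>v. peval f (\<sigma> v)) e"
  by (induction e) auto

lemma pvars_psubst: "pvars (psubst \<sigma> e) = (\<Union>v\<in>pvars e. pvars (\<sigma> v))"
  by (induction e) auto

lemma has_x_factor_psubst: "has_x_factor e \<Longrightarrow> has_x_factor (psubst \<sigma> e)"
  by (induction e) auto

lemma guarded_psubst: "guarded e \<Longrightarrow> guarded (psubst \<sigma> e)"
  by (induction e) (auto simp: has_x_factor_psubst)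

lemma nonneg_coeffs_psubst:
  "nonneg_coeffs e \<Longrightarrow> (\<And>v. v \<in> pvars e \<Longrightarrow> nonneg_coeffs (\<sigma> v)) \<Longrightarrow>
     nonneg_coeffs (psubst \<sigma> e)"
  by (induction e) auto

lemma psum_simps:
  assumes "finite A"
  shows "peval f (psum A g) = (\<Sum>x\<in>A. peval f (g x))"
    and "pvars (psum A g) = (\<Union>x\<in>A. pvars (g x))"
    and "guarded (psum A g) \<longleftrightarrow> (\<forall>x\<in>A. guarded (g x))"
    and "nonneg_coeffs (psum A g) \<longleftrightarrow> (\<forall>x\<in>A. nonneg_coeffs (g x))"
proof -
  have list_simps: "peval f (foldr (\<lambda>x. PAdd (g x)) xs (PC 0 0)) = (\<Sum>x\<leftarrow>xs. peval f (g x))"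
    "pvars (foldr (\<lambda>x. PAdd (g x)) xs (PC 0 0)) = (\<Union>x\<in>set xs. pvars (g x))"
    "guarded (foldr (\<lambda>x. PAdd (g x)) xs (PC 0 0)) \<longleftrightarrow> (\<forall>x\<in>set xs. guarded (g x))"
    "nonneg_coeffs (foldr (\<lambda>x. PAdd (g x)) xs (PC 0 0)) \<longleftrightarrow> (\<forall>x\<in>set xs. nonneg_coeffs (g x))"
    for xs by (induction xs) auto
  show "peval f (psum A g) = (\<Sum>x\<in>A. peval f (g x))"
    "pvars (psum A g) = (\<Union>x\<in>A. pvars (g x))"
    "guarded (psum A g) \<longleftrightarrow> (\<forall>x\<in>A. guarded (g x))"
    "nonneg_coeffs (psum A g) \<longleftrightarrow> (\<forall>x\<in>A. nonneg_coeffs (g x))"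
    using assms by (simp_all add: psum_def list_simps sum_list_distinct_conv_sum_set)
qed

section \<open>Guarded systems\<close>

definition fps_agree :: "nat \<Rightarrow> 'a::comm_ring_1 fps \<Rightarrow> 'a fps \<Rightarrow> bool" where
  "fps_agree m f g \<longleftrightarrow> (\<forall>k<m. f $ k = g $ k)"

lemma fps_agree_0 [simp]: "fps_agree 0 f g"
  by (simp add: fps_agree_def)

lemma fps_agree_refl [simp]: "fps_agree m f f"
  by (simp add: fps_agree_def)

lemma fps_agree_sym: "fps_agree m f g \<Longrightarrow> fps_agree m g f"
  by (simp add: fps_agree_def)

lemma fps_agree_trans: "fps_agree m f g \<Longrightarrow> fps_agree m g h \<Longrightarrow> fps_agree m f h"
  by (simp add: fps_agree_def)

lemma fps_agree_mono: "fps_agree m f g \<Longrightarrow> n \<le> m \<Longrightarrow> fps_agree n f g"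
  by (simp add: fps_agree_def)

lemma fps_agree_all_imp_eq: "(\<And>m. fps_agree m f g) \<Longrightarrow> f = g"
  unfolding fps_agree_def by (metis fps_ext lessI)

lemma fps_agree_add: "fps_agree m a b \<Longrightarrow> fps_agree m c d \<Longrightarrow> fps_agree m (a + c) (b + d)"
  by (simp add: fps_agree_def)

lemma fps_agree_mult: "fps_agree m a b \<Longrightarrow> fps_agree m c d \<Longrightarrow> fps_agree m (a * c) (b * d)"
  unfolding fps_agree_def fps_mult_nth by (auto intro!: sum.cong)

lemma fps_agree_X_mult: "fps_agree m a b \<Longrightarrow> fps_agree (Suc m) (fps_X * a) (fps_X * b)"
  by (simp add: fps_agree_def)

lemma fps_agree_mult_Suc:
  assumes "fps_agree (Suc m) a b" "fps_agree m c d" "a $ 0 = 0" "b $ 0 = 0"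
  shows "fps_agree (Suc m) (a * c) (b * d)"
  unfolding fps_agree_def fps_mult_nth
proof (intro allI impI sum.cong)
  fix k i assume "k < Suc m" "i \<in> {0..k}"
  then show "a $ i * c $ (k - i) = b $ i * d $ (k - i)"
    using assms by (cases "i = 0") (auto simp: fps_agree_def)
qed simp

lemma peval_agree:
  "(\<And>v. v \<in> pvars e \<Longrightarrow> fps_agree m (f v) (g v)) \<Longrightarrow> fps_agree m (peval f e) (peval g e)"
  by (induction e) (auto intro: fps_agree_add fps_agree_mult)

lemma peval_agree_Suc_if_guarded:
  "guarded e \<Longrightarrow> (\<And>v. v \<in> pvars e \<Longrightarrow> fps_agree m (f v) (g v)) \<Longrightarrow>
     fps_agree (Suc m) (peval f e) (peval g e)"
proof (induction e)
  case (PMul a b)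
  have vars_a: "\<And>v. v \<in> pvars a \<Longrightarrow> fps_agree m (f v) (g v)"
    and vars_b: "\<And>v. v \<in> pvars b \<Longrightarrow> fps_agree m (f v) (g v)"
    using PMul.prems(2) by auto
  have agree_a: "fps_agree m (peval f a) (peval g a)"
    and agree_b: "fps_agree m (peval f b) (peval g b)"
    using vars_a vars_b by (blast intro: peval_agree)+
  consider "guarded a \<and> guarded b" | "has_x_factor a" | "has_x_factor b"
    using PMul.prems by auto
  then show ?case
  proof cases
    case 1
    then show ?thesis using PMul.IH vars_a vars_b by (simp add: fps_agree_mult)
  next
    case 2
    then have "fps_agree (Suc m) (peval f a) (peval g a)"
      using PMul.IH(1) vars_a has_x_factor_imp_guarded by blast
    then show ?thesis
      using 2 agree_b by (simp add: fps_agree_mult_Suc peval_nth_0_if_has_x_factor)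
  next
    case 3
    then have "fps_agree (Suc m) (peval f b) (peval g b)"
      using PMul.IH(2) vars_b has_x_factor_imp_guarded by blast
    then have "fps_agree (Suc m) (peval f b * peval f a) (peval g b * peval g a)"
      using 3 agree_a by (simp add: fps_agree_mult_Suc peval_nth_0_if_has_x_factor)
    then show ?thesis by (simp add: mult.commute)
  qed
qed (auto intro: fps_agree_add fps_agree_X_mult peval_agree)

lemma guarded_system_unique:
  assumes "\<forall>v\<in>S. guarded (eqs v) \<and> pvars (eqs v) \<subseteq> S"
    and "\<forall>v\<in>S. f v = peval f (eqs v)" and "\<forall>v\<in>S. g v = peval g (eqs v)"
  shows "\<forall>v\<in>S. f v = g v"
proof -
  have "\<forall>v\<in>S. fps_agree m (f v) (g v)" for m
  proof (induction m)
    case (Suc m)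
    show ?case
      using assms by (metis Suc peval_agree_Suc_if_guarded subsetD)
  qed simp
  then show ?thesis by (auto intro: fps_agree_all_imp_eq)
qed

text \<open>The Picard iterates \<open>Y n\<close> stabilise coefficientwise: \<open>Y n\<close> and \<open>Y (n + 1)\<close> agree below
  \<open>x\<^sup>n\<close>, so their diagonal limit is a solution.\<close>

lemma guarded_system_solvable:
  assumes eqs: "\<forall>v\<in>S. guarded (eqs v) \<and> pvars (eqs v) \<subseteq> S"
  shows "\<exists>f. \<forall>v\<in>S. f v = peval f (eqs v)"
proof -
  define Y where "Y n = ((\<lambda>f v. peval f (eqs v)) ^^ n) (\<lambda>_. 0)" for n
  have Y_Suc: "Y (Suc n) v = peval (Y n) (eqs v)" for n v
    by (simp add: Y_def)
  have Y_step: "\<forall>v\<in>S. fps_agree n (Y n v) (Y (Suc n) v)" for n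
  proof (induction n)
    case (Suc n)
    then show ?case
      using eqs by (metis Y_Suc peval_agree_Suc_if_guarded subsetD)
  qed simp
  have Y_stable: "fps_agree n (Y n v) (Y p v)" if "v \<in> S" "n \<le> p" for n p v
    using that(2)
  proof (induction p rule: dec_induct)
    case (step p)
    then show ?case
      using Y_step that(1) by (meson fps_agree_mono fps_agree_trans)
  qed simp
  define f where "f v = Abs_fps (\<lambda>k. Y (Suc k) v $ k)" for v
  have f_Y: "fps_agree n (f v) (Y n v)" if "v \<in> S" for n v
    using Y_stable[OF that] by (auto simp: fps_agree_def f_def)
  have "f v = peval f (eqs v)" if v: "v \<in> S" for v
  proof (rule fps_agree_all_imp_eq)
    fix n
    have "fps_agree (Suc n) (peval f (eqs v)) (Y (Suc n) v)"
      unfolding Y_Suc using eqs v f_Y by (intro peval_agree_Suc_if_guarded) blast+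
    then show "fps_agree n (f v) (peval f (eqs v))"
      by (meson f_Y v fps_agree_mono fps_agree_sym fps_agree_trans le_SucI order_refl)
  qed
  then show ?thesis by blast
qed

section \<open>Finite grammars from guarded systems\<close>

primrec monomials :: "'v pexp \<Rightarrow> (real \<times> nat \<times> 'v list) list" where
  "monomials (PC p n) = [(p $ b, b, []). b \<leftarrow> [0..<Suc n]]"
| "monomials (PV v) = [(1, 0, [v])]"
| "monomials (PAdd a b) = monomials a @ monomials b"
| "monomials (PMul a b) =
     [(c1 * c2, n1 + n2, ws1 @ ws2). (c1, n1, ws1) \<leftarrow> monomials a, (c2, n2, ws2) \<leftarrow> monomials b]"
| "monomials (PX a) = [(c, Suc n, ws). (c, n, ws) \<leftarrow> monomials a]"

definition eval_monomial :: "('v \<Rightarrow> real fps) \<Rightarrow> real \<times> nat \<times> 'v list \<Rightarrow> real fps" where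
  "eval_monomial f = (\<lambda>(c, n, ws). fps_const c * fps_X ^ n * prod_list (map f ws))"

lemma sum_list_concat_map:
  "sum_list (map g (concat (map h xs))) = (\<Sum>x\<leftarrow>xs. sum_list (map g (h x)))"
  by (induction xs) auto

lemma peval_eq_sum_monomials: "peval f e = (\<Sum>t\<leftarrow>monomials e. eval_monomial f t)"
proof (induction e)
  case (PC p n)
  show ?case
    by (simp add: eval_monomial_def o_def sum_list_distinct_conv_sum_set atLeast0LessThan
        lessThan_Suc_atMost del: upt_Suc)
next
  case (PMul a b)
  have "eval_monomial f (c1 * c2, n1 + n2, ws1 @ ws2) =
      eval_monomial f (c1, n1, ws1) * eval_monomial f (c2, n2, ws2)" for c1 n1 ws1 c2 n2 ws2
    by (simp add: eval_monomial_def power_add mult_ac flip: fps_const_mult)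
  then show ?case
    by (simp add: PMul sum_list_concat_map sum_list_const_mult sum_list_mult_const
        split_def o_def)
next
  case (PX a)
  then show ?case
    by (simp add: eval_monomial_def split_def o_def mult_ac sum_list_const_mult)
qed (simp_all add: eval_monomial_def)

lemma monomials_nonneg: "nonneg_coeffs e \<Longrightarrow> t \<in> set (monomials e) \<Longrightarrow> fst t \<ge> 0"
  by (induction e arbitrary: t) auto

lemma monomials_vars: "t \<in> set (monomials e) \<Longrightarrow> set (snd (snd t)) \<subseteq> pvars e"
  by (induction e arbitrary: t) fastforce+

definition monomial_key :: "real \<times> nat \<times> nat list \<Rightarrow> nat \<times> (nat \<Rightarrow> nat)" where
  "monomial_key = (\<lambda>(c, n, ws). (n, count_list ws))"

definition mpoly_of :: "nat pexp \<Rightarrow> (nat \<times> (nat \<Rightarrow> nat)) \<Rightarrow> real" where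
  "mpoly_of e mn = (\<Sum>t\<leftarrow>filter (\<lambda>t. monomial_key t = mn) (monomials e). fst t)"

lemma sum_list_group_by:
  fixes g :: "'a \<Rightarrow> 'b::comm_monoid_add"
  shows "(\<Sum>x\<leftarrow>xs. g x) = (\<Sum>y\<in>k ` set xs. \<Sum>x\<leftarrow>filter (\<lambda>x. k x = y) xs. g x)"
proof (induction xs)
  case (Cons x xs)
  let ?group = "\<lambda>y. \<Sum>z\<leftarrow>filter (\<lambda>z. k z = y) xs. g z"
  have "(\<Sum>y\<in>k ` set (x # xs). \<Sum>z\<leftarrow>filter (\<lambda>z. k z = y) (x # xs). g z) =
      (\<Sum>y\<in>insert (k x) (k ` set xs). (if k x = y then g x else 0) + ?group y)"
    by (rule sum.cong) auto
  also have "\<dots> = g x + (\<Sum>y\<in>insert (k x) (k ` set xs). ?group y)"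
    by (simp add: sum.distrib)
  also have "(\<Sum>y\<in>insert (k x) (k ` set xs). ?group y) = (\<Sum>y\<in>k ` set xs. ?group y)"
  proof -
    have "?group (k x) = 0" if "k x \<notin> k ` set xs"
      using that by (metis (mono_tags) filter_empty_conv image_eqI list.map(1) sum_list.Nil)
    then show ?thesis
      by (cases "k x \<in> k ` set xs") (simp_all add: insert_absorb)
  qed
  finally show ?case
    using Cons by simp
qed simp

lemma support_mpoly_of: "{mn. mpoly_of e mn \<noteq> 0} \<subseteq> monomial_key ` set (monomials e)"
proof
  fix mn assume "mn \<in> {mn. mpoly_of e mn \<noteq> 0}"
  then have "filter (\<lambda>t. monomial_key t = mn) (monomials e) \<noteq> []"
    by (auto simp: mpoly_of_def)
  then show "mn \<in> monomial_key ` set (monomials e)"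
    by (auto simp: filter_empty_conv)
qed

lemma nonneg_mpoly_of:
  assumes "nonneg_coeffs e" "pvars e \<subseteq> {..<m}"
  shows "nonneg_mpoly m (mpoly_of e)"
proof -
  have "mpoly_of e mn \<ge> 0" for mn
    unfolding mpoly_of_def using monomials_nonneg[OF assms(1)] by (intro sum_list_nonneg) auto
  moreover have "snd mn i = 0" if "mpoly_of e mn \<noteq> 0" "i \<ge> m" for mn i
  proof -
    obtain t where t: "t \<in> set (monomials e)" "mn = monomial_key t"
      using support_mpoly_of \<open>mpoly_of e mn \<noteq> 0\<close> by blast
    then have "i \<notin> set (snd (snd t))"
      using monomials_vars[OF t(1)] assms(2) \<open>i \<ge> m\<close> by auto
    then show ?thesis
      using t(2) by (simp add: monomial_key_def split_def count_list_0_iff)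
  qed
  ultimately show ?thesis
    unfolding nonneg_mpoly_def using finite_subset[OF support_mpoly_of] by auto
qed

lemma prod_power_count_list:
  "set ws \<subseteq> {..<length ys} \<Longrightarrow>
     (\<Prod>i<length ys. (ys ! i) ^ count_list ws i) = prod_list (map ((!) ys) ws)"
proof (induction ws)
  case (Cons w ws)
  have "(\<Prod>i<length ys. (ys ! i) ^ count_list (w # ws) i) =
      (\<Prod>i<length ys. (if i = w then ys ! i else 1) * (ys ! i) ^ count_list ws i)"
    by (rule prod.cong) auto
  also have "\<dots> = ys ! w * (\<Prod>i<length ys. (ys ! i) ^ count_list ws i)"
    using Cons.prems by (simp add: prod.distrib)
  finally show ?case
    using Cons by simp
qed simp

lemma eval_mpoly_of:
  assumes "pvars e \<subseteq> {..<length ys}"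
  shows "eval_mpoly (mpoly_of e) ys = peval ((!) ys) e"
proof -
  let ?K = "monomial_key ` set (monomials e)"
  let ?mon = "\<lambda>mn. fps_X ^ fst mn * (\<Prod>i<length ys. (ys ! i) ^ snd mn i)"
  let ?term = "\<lambda>t. fps_const (fst t) * ?mon (monomial_key t)"
  have "eval_mpoly (mpoly_of e) ys = (\<Sum>mn\<in>?K. fps_const (mpoly_of e mn) * ?mon mn)"
    unfolding eval_mpoly_def mult.assoc
    by (rule sum.mono_neutral_left) (use support_mpoly_of[of e] in auto)
  also have "\<dots> = (\<Sum>mn\<in>?K. \<Sum>t\<leftarrow>filter (\<lambda>t. monomial_key t = mn) (monomials e). ?term t)"
  proof (rule sum.cong)
    fix mn
    have const_sum: "fps_const (\<Sum>t\<leftarrow>xs. fst t) * ?mon mn = (\<Sum>t\<leftarrow>xs. fps_const (fst t) * ?mon mn)"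
      for xs :: "(real \<times> nat \<times> nat list) list"
      by (induction xs) (simp_all add: distrib_right flip: fps_const_add)
    show "fps_const (mpoly_of e mn) * ?mon mn =
        (\<Sum>t\<leftarrow>filter (\<lambda>t. monomial_key t = mn) (monomials e). ?term t)"
      unfolding mpoly_of_def const_sum by (intro arg_cong[where f = sum_list] map_cong) auto
  qed simp
  also have "\<dots> = (\<Sum>t\<leftarrow>monomials e. ?term t)"
    by (rule sum_list_group_by[symmetric])
  also have "\<dots> = (\<Sum>t\<leftarrow>monomials e. eval_monomial ((!) ys) t)"
  proof (rule arg_cong[where f = sum_list], rule map_cong)
    fix t assume "t \<in> set (monomials e)"
    then have "set (snd (snd t)) \<subseteq> {..<length ys}"
      using monomials_vars assms by blast
    then show "?term t = eval_monomial ((!) ys) t"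
      by (simp add: monomial_key_def eval_monomial_def split_def prod_power_count_list mult.assoc)
  qed simp
  finally show ?thesis
    by (simp add: peval_eq_sum_monomials)
qed

lemma finite_grammar_of_guarded_nat_system:
  fixes eqs :: "nat \<Rightarrow> nat pexp"
  assumes "0 < m"
    and eqs: "\<forall>i<m. guarded (eqs i) \<and> nonneg_coeffs (eqs i) \<and> pvars (eqs i) \<subseteq> {..<m}"
    and val: "\<forall>i<m. val i = peval val (eqs i)"
  shows "finite_grammar (val 0)"
proof -
  define Rs where "Rs = map (\<lambda>i. mpoly_of (eqs i)) [0..<m]"
  define ys where "ys = map val [0..<m]"
  have eval: "eval_mpoly (Rs ! i) zs = peval ((!) zs) (eqs i)" if "i < m" "length zs = m" for i zs
    using that eqs by (simp add: Rs_def eval_mpoly_of)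
  have eval_ys: "eval_mpoly (Rs ! i) ys = val i" if "i < m" for i
  proof -
    have "eval_mpoly (Rs ! i) ys = peval ((!) ys) (eqs i)"
      using eval \<open>i < m\<close> by (simp add: ys_def)
    also have "\<dots> = peval val (eqs i)"
    proof (rule peval_cong)
      fix v assume "v \<in> pvars (eqs i)"
      then have "v < m"
        using eqs \<open>i < m\<close> by blast
      then show "ys ! v = val v"
        by (simp add: ys_def)
    qed
    finally show ?thesis
      using val \<open>i < m\<close> by simp
  qed
  have sol: "is_solution Rs ys"
    unfolding is_solution_def using eval_ys by (simp add: Rs_def ys_def)
  have unique: "ys' = ys" if "is_solution Rs ys'" for ys'
  proof -
    have "length ys' = m" "\<forall>i\<in>{..<m}. ys' ! i = peval ((!) ys') (eqs i)"
      using that eval by (auto simp: is_solution_def Rs_def)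
    then have "\<forall>i\<in>{..<m}. ys' ! i = val i"
      using guarded_system_unique[of "{..<m}" eqs "(!) ys'" val] eqs val by blast
    then show ?thesis
      using \<open>length ys' = m\<close> by (simp add: ys_def nth_equalityI)
  qed
  have "\<forall>i<m. nonneg_mpoly m (Rs ! i)"
    using eqs by (simp add: Rs_def nonneg_mpoly_of)
  moreover have "length Rs = m" "val 0 = ys ! 0" "1 \<le> m"
    using \<open>0 < m\<close> by (simp_all add: Rs_def ys_def)
  ultimately show ?thesis
    unfolding finite_grammar_def using sol unique by blast
qed

lemma finite_grammar_of_guarded_system:
  assumes "finite S" "v0 \<in> S"
    and eqs: "\<forall>v\<in>S. guarded (eqs v) \<and> nonneg_coeffs (eqs v) \<and> pvars (eqs v) \<subseteq> S"
    and val: "\<forall>v\<in>S. val v = peval val (eqs v)"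
  shows "finite_grammar (val v0)"
proof -
  obtain ws where ws: "set ws = S - {v0}" "distinct ws"
    using finite_distinct_list \<open>finite S\<close> by (meson finite_Diff)
  define vs where "vs = v0 # ws"
  have vs: "distinct vs" "set vs = S"
    using ws \<open>v0 \<in> S\<close> by (auto simp: vs_def)
  define idx where "idx v = (THE i. i < length vs \<and> vs ! i = v)" for v
  have idx: "idx v < length vs \<and> vs ! idx v = v" if "v \<in> S" for v
    unfolding idx_def by (rule theI') (use vs that in \<open>simp add: distinct_Ex1\<close>)
  define eqs' where "eqs' i = psubst (\<lambda>v. PV (idx v)) (eqs (vs ! i))" for i
  have "finite_grammar ((\<lambda>i. val (vs ! i)) 0)"
  proof (rule finite_grammar_of_guarded_nat_system)
    show "\<forall>i<length vs. guarded (eqs' i) \<and> nonneg_coeffs (eqs' i) \<and> pvars (eqs' i) \<subseteq> {..<length vs}"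
    proof (intro allI impI conjI)
      fix i assume "i < length vs"
      then have "vs ! i \<in> S"
        using vs by auto
      then show "guarded (eqs' i)" "nonneg_coeffs (eqs' i)" "pvars (eqs' i) \<subseteq> {..<length vs}"
        using eqs idx by (auto simp: eqs'_def guarded_psubst nonneg_coeffs_psubst pvars_psubst)
    qed
    have "val (vs ! i) = peval (\<lambda>i. val (vs ! i)) (eqs' i)" if "i < length vs" for i
    proof -
      have "vs ! i \<in> S"
        using that vs by auto
      then have "val (vs ! i) = peval val (eqs (vs ! i))"
        using val by blast
      also have "\<dots> = peval (\<lambda>v. val (vs ! idx v)) (eqs (vs ! i))"
      proof (rule peval_cong)
        fix v assume "v \<in> pvars (eqs (vs ! i))"
        then have "v \<in> S"
          using eqs \<open>vs ! i \<in> S\<close> by blast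
        then show "val v = val (vs ! idx v)"
          using idx by simp
      qed
      finally show ?thesis
        by (simp add: eqs'_def peval_psubst)
    qed
    then show "\<forall>i<length vs. val (vs ! i) = peval (\<lambda>i. val (vs ! i)) (eqs' i)"
      by blast
  qed (simp add: vs_def)
  then show ?thesis
    by (simp add: vs_def)
qed

section \<open>First-exit generating functions\<close>

text \<open>\<^term>\<open>exit_gf T d N t i j r\<close> is the total weight of the walks that start at height \<open>t\<close> in
  state \<open>i\<close>, repeatedly move down by \<open>r' \<in> {1..N}\<close> into a state \<open>i' < d\<close> with weight
  \<open>T i i' r'\<close>, and stop on first reaching a negative height, which is \<open>-r\<close> in state \<open>j\<close>.\<close>

function exit_gf ::
    "(nat \<Rightarrow> nat \<Rightarrow> nat \<Rightarrow> 'a::comm_semiring_1) \<Rightarrow> nat \<Rightarrow> nat \<Rightarrow> int \<Rightarrow> nat \<Rightarrow> nat \<Rightarrow> nat \<Rightarrow> 'a"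
  where "exit_gf T d N t i j r =
    (if t < 0 then (if i = j \<and> t = - int r then 1 else 0)
     else (\<Sum>(i', r')\<in>{..<d} \<times> {1..N}. T i i' r' * exit_gf T d N (t - int r') i' j r))"
  by auto
termination
  by (relation "measure (\<lambda>(T, d, N, t, i, j, r). nat (t + 1))") auto

declare exit_gf.simps [simp del]

lemma exit_gf_neg: "t < 0 \<Longrightarrow> exit_gf T d N t i j r = (if i = j \<and> t = - int r then 1 else 0)"
  by (simp add: exit_gf.simps)

lemma exit_gf_nonneg:
  "0 \<le> t \<Longrightarrow> exit_gf T d N t i j r =
     (\<Sum>(i', r')\<in>{..<d} \<times> {1..N}. T i i' r' * exit_gf T d N (t - int r') i' j r)"
  by (subst exit_gf.simps) simp

lemma sum_exit_gf_neg:
  assumes "t < 0" "i < d"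
  shows "(\<Sum>(i', r')\<in>{..<d} \<times> {1..N}. exit_gf T d N t i i' r' * g i' r') =
    (if - int N \<le> t then g i (nat (- t)) else 0)"
proof -
  have "(\<Sum>(i', r')\<in>{..<d} \<times> {1..N}. exit_gf T d N t i i' r' * g i' r') =
      (\<Sum>x\<in>{..<d} \<times> {1..N}. if x = (i, nat (- t)) then case_prod g x else 0)"
    using assms(1) by (intro sum.cong refl) (auto simp: exit_gf_neg split: if_splits)
  also have "\<dots> = (if - int N \<le> t then g i (nat (- t)) else 0)"
    using assms by (subst sum.delta) auto
  finally show ?thesis .
qed

text \<open>Split a walk from height \<open>t + s\<close> at its first visit below height \<open>s\<close>.\<close>

lemma exit_gf_concat:
  assumes "- int N \<le> t" "0 \<le> s" "i < d"
  shows "(\<Sum>(i', r')\<in>{..<d} \<times> {1..N}. exit_gf T d N t i i' r' * exit_gf T d N (s - int r') i' j r) =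
    exit_gf T d N (t + s) i j r"
  using assms
proof (induction "nat (t + int N)" arbitrary: t i rule: less_induct)
  case less
  show ?case
  proof (cases "t < 0")
    case True
    then show ?thesis
      using less.prems sum_exit_gf_neg[where g = "\<lambda>i' r'. exit_gf T d N (s - int r') i' j r"]
      by (simp add: add.commute)
  next
    case False
    let ?D = "{..<d} \<times> {1..N}"
    have "(\<Sum>(i', r')\<in>?D. exit_gf T d N t i i' r' * exit_gf T d N (s - int r') i' j r) =
        (\<Sum>(i', r')\<in>?D. \<Sum>(i1, r1)\<in>?D.
           T i i1 r1 * (exit_gf T d N (t - int r1) i1 i' r' * exit_gf T d N (s - int r') i' j r))"
      using False by (simp add: exit_gf_nonneg[of t] sum_distrib_right mult.assoc split_def)
    also have "\<dots> = (\<Sum>(i1, r1)\<in>?D. T i i1 r1 *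
        (\<Sum>(i', r')\<in>?D. exit_gf T d N (t - int r1) i1 i' r' * exit_gf T d N (s - int r') i' j r))"
      unfolding sum_distrib_left split_def by (rule sum.swap)
    also have "\<dots> = (\<Sum>(i1, r1)\<in>?D. T i i1 r1 * exit_gf T d N (t - int r1 + s) i1 j r)"
      using False less by (intro sum.cong refl) auto
    also have "\<dots> = exit_gf T d N (t + s) i j r"
      using False less.prems by (simp add: exit_gf_nonneg[of "t + s"] diff_add_eq)
    finally show ?thesis .
  qed
qed

lemma exit_gf_first_step:
  assumes "finite Y"
    and T_eq: "\<And>i' r'. i' < d \<Longrightarrow> r' \<in> {1..N} \<Longrightarrow>
      T i i' r' = (\<Sum>y\<in>Y. w y * exit_gf T d N (h y) (st y) i' r')"
    and steps: "\<And>y. y \<in> Y \<Longrightarrow> - int N \<le> h y \<and> st y < d"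
    and "0 \<le> s"
  shows "exit_gf T d N s i j r = (\<Sum>y\<in>Y. w y * exit_gf T d N (h y + s) (st y) j r)"
proof -
  let ?D = "{..<d} \<times> {1..N}"
  have "exit_gf T d N s i j r = (\<Sum>(i', r')\<in>?D. \<Sum>y\<in>Y.
      w y * (exit_gf T d N (h y) (st y) i' r' * exit_gf T d N (s - int r') i' j r))"
    using \<open>0 \<le> s\<close> T_eq
    by (auto simp: exit_gf_nonneg[of s] sum_distrib_right mult.assoc intro!: sum.cong)
  also have "\<dots> = (\<Sum>y\<in>Y. w y *
      (\<Sum>(i', r')\<in>?D. exit_gf T d N (h y) (st y) i' r' * exit_gf T d N (s - int r') i' j r))"
    unfolding sum_distrib_left split_def by (rule sum.swap)
  also have "\<dots> = (\<Sum>y\<in>Y. w y * exit_gf T d N (h y + s) (st y) j r)"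
    using steps \<open>0 \<le> s\<close>
    by (intro sum.cong refl arg_cong2[where f = "(*)"] exit_gf_concat) auto
  finally show ?thesis .
qed

section \<open>The coefficient system\<close>

definition bipoly_degree_le :: "nat \<Rightarrow> real fps fps \<Rightarrow> bool" where
  "bipoly_degree_le N p \<longleftrightarrow> (\<forall>k n. (N < k \<or> N < n) \<longrightarrow> p $ k $ n = 0)"

lemma bipoly_degree_le_mono: "bipoly_degree_le N p \<Longrightarrow> N \<le> M \<Longrightarrow> bipoly_degree_le M p"
  by (auto simp: bipoly_degree_le_def)

lemma bipoly_degree_le_nth_eq_0: "bipoly_degree_le N p \<Longrightarrow> N < k \<Longrightarrow> p $ k = 0"
  by (simp add: bipoly_degree_le_def fps_eq_iff)

lemma nonneg_bipolys_degree_le: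
  assumes "finite A" "\<forall>x\<in>A. nonneg_bipoly (p x)"
  shows "\<exists>N. \<forall>x\<in>A. bipoly_degree_le N (p x)"
proof -
  have "\<forall>x\<in>A. \<exists>N. bipoly_degree_le N (p x)"
    using assms(2) by (auto simp: nonneg_bipoly_def bipoly_degree_le_def)
  then obtain deg where deg: "\<forall>x\<in>A. bipoly_degree_le (deg x) (p x)"
    by (auto dest: bchoice)
  have "bipoly_degree_le (\<Sum>y\<in>A. deg y) (p x)" if "x \<in> A" for x
  proof (rule bipoly_degree_le_mono)
    show "bipoly_degree_le (deg x) (p x)"
      using deg that by blast
    show "deg x \<le> (\<Sum>y\<in>A. deg y)"
      by (rule member_le_sum) (use assms(1) that in auto)
  qed
  then show ?thesis
    by blast
qed

lemma fps_eq_sum_coeffs: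
  assumes "\<forall>b>n. p $ b = 0"
  shows "(\<Sum>b\<le>n. fps_const (p $ b) * fps_X ^ b) = p"
proof (rule fps_ext)
  fix k
  have "(\<Sum>b\<le>n. fps_const (p $ b) * fps_X ^ b) $ k = (\<Sum>b\<le>n. if k = b then p $ b else 0)"
    by (simp add: fps_sum_nth if_distrib cong: if_cong)
  also have "\<dots> = p $ k"
    using assms by (cases "k \<le> n") auto
  finally show "(\<Sum>b\<le>n. fps_const (p $ b) * fps_X ^ b) $ k = p $ k" .
qed

lemma bipoly_degree_le_coeff:
  "bipoly_degree_le N p \<Longrightarrow> (\<Sum>b\<le>N. fps_const (p $ k $ b) * fps_X ^ b) = p $ k"
  by (rule fps_eq_sum_coeffs) (simp add: bipoly_degree_le_def)

definition solves_coeff_system :: "(nat \<Rightarrow> real fps fps) \<Rightarrow> (nat \<Rightarrow> nat \<Rightarrow> nat \<Rightarrow> real fps fps) \<Rightarrow>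
    nat \<Rightarrow> nat \<Rightarrow> (nat \<times> nat \<Rightarrow> real fps) \<Rightarrow> bool"
  where "solves_coeff_system P Q d L f \<longleftrightarrow> (\<forall>i<d. \<forall>k. f (i, k) = P i $ k + fps_X *
     (\<Sum>(j, l, a)\<in>{..<d} \<times> {..L} \<times> {..k}. Q i j l $ a * f (j, k - a + l)))"

definition coeff_expr :: "(nat \<Rightarrow> real fps fps) \<Rightarrow> (nat \<Rightarrow> nat \<Rightarrow> nat \<Rightarrow> real fps fps) \<Rightarrow>
    nat \<Rightarrow> nat \<Rightarrow> nat \<Rightarrow> nat \<Rightarrow> nat \<Rightarrow> (nat \<times> nat) pexp"
  where "coeff_expr P Q d L N i k = PAdd (PC (P i $ k) N) (PX (psum ({..<d} \<times> {..L} \<times> {..k})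
     (\<lambda>(j, l, a). PMul (PC (Q i j l $ a) N) (PV (j, k - a + l)))))"

lemma guarded_coeff_expr: "guarded (coeff_expr P Q d L N i k)"
  by (simp add: coeff_expr_def)

lemma pvars_coeff_expr:
  "pvars (coeff_expr P Q d L N i k) = (\<lambda>(j, l, a). (j, k - a + l)) ` ({..<d} \<times> {..L} \<times> {..k})"
  by (auto simp: coeff_expr_def psum_simps split_def)

lemma peval_coeff_expr:
  assumes "bipoly_degree_le N (P i)" "\<forall>j<d. \<forall>l\<le>L. bipoly_degree_le N (Q i j l)"
  shows "peval f (coeff_expr P Q d L N i k) = P i $ k + fps_X *
    (\<Sum>(j, l, a)\<in>{..<d} \<times> {..L} \<times> {..k}. Q i j l $ a * f (j, k - a + l))"
  using assms by (auto simp: coeff_expr_def psum_simps bipoly_degree_le_coeff intro!: sum.cong)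

lemma solves_coeff_system_peval:
  assumes "\<forall>i<d. bipoly_degree_le N (P i)" "\<forall>i<d. \<forall>j<d. \<forall>l\<le>L. bipoly_degree_le N (Q i j l)"
    and "solves_coeff_system P Q d L f" "i < d"
  shows "f (i, k) = peval f (coeff_expr P Q d L N i k)"
proof -
  have "f (i, k) = P i $ k + fps_X *
      (\<Sum>(j, l, a)\<in>{..<d} \<times> {..L} \<times> {..k}. Q i j l $ a * f (j, k - a + l))"
    using assms(3,4) unfolding solves_coeff_system_def by blast
  also have "\<dots> = peval f (coeff_expr P Q d L N i k)"
    using assms(1,2,4) by (simp add: peval_coeff_expr)
  finally show ?thesis .
qed

lemma coeff_system_unique:
  assumes "\<forall>i<d. bipoly_degree_le N (P i)" "\<forall>i<d. \<forall>j<d. \<forall>l\<le>L. bipoly_degree_le N (Q i j l)"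
    and "solves_coeff_system P Q d L f" "solves_coeff_system P Q d L g" "i < d"
  shows "f (i, k) = g (i, k)"
proof -
  have peval_eq: "\<forall>v\<in>{..<d} \<times> UNIV. h v = peval h (case_prod (coeff_expr P Q d L N) v)"
    if "solves_coeff_system P Q d L h" for h
  proof
    fix v assume "v \<in> {..<d} \<times> (UNIV :: nat set)"
    then obtain i k where v: "v = (i, k)" "i < d"
      by auto
    have "h (i, k) = peval h (coeff_expr P Q d L N i k)"
      using assms(1,2) that v(2) by (rule solves_coeff_system_peval)
    then show "h v = peval h (case_prod (coeff_expr P Q d L N) v)"
      by (simp only: v split_conv)
  qed
  have "\<forall>v\<in>{..<d} \<times> UNIV. f v = g v"
  proof (rule guarded_system_unique)
    show "\<forall>v\<in>{..<d} \<times> UNIV. guarded (case_prod (coeff_expr P Q d L N) v) \<and>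
        pvars (case_prod (coeff_expr P Q d L N) v) \<subseteq> {..<d} \<times> UNIV"
      by (auto simp: guarded_coeff_expr pvars_coeff_expr)
  qed (use peval_eq assms(3,4) in blast)+
  then show ?thesis
    using \<open>i < d\<close> by blast
qed

lemma solves_coeff_system_coeffs:
  assumes "\<forall>i<d. F i = P i + fps_const fps_X * (\<Sum>j<d. \<Sum>l\<le>L. Q i j l * Delta l (F j))"
  shows "solves_coeff_system P Q d L (\<lambda>(i, k). F i $ k)"
  unfolding solves_coeff_system_def
proof (intro allI impI)
  fix i k assume "i < d"
  have "F i = P i + fps_const fps_X * (\<Sum>j<d. \<Sum>l\<le>L. Q i j l * Delta l (F j))"
    using assms \<open>i < d\<close> by blast
  then have "F i $ k = (P i + fps_const fps_X * (\<Sum>j<d. \<Sum>l\<le>L. Q i j l * Delta l (F j))) $ k"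
    by (rule arg_cong)
  also have "\<dots> = P i $ k + fps_X * (\<Sum>j<d. \<Sum>l\<le>L. \<Sum>a\<le>k. Q i j l $ a * F j $ (k - a + l))"
    by (simp only: fps_add_nth fps_mult_left_const_nth)
      (simp add: fps_sum_nth fps_mult_nth Delta_def atLeast0AtMost)
  also have "(\<Sum>j<d. \<Sum>l\<le>L. \<Sum>a\<le>k. Q i j l $ a * F j $ (k - a + l)) =
      (\<Sum>(j, l, a)\<in>{..<d} \<times> {..L} \<times> {..k}. Q i j l $ a * F j $ (k - a + l))"
    by (simp only: sum.cartesian_product)
  finally show "(\<lambda>(i, k). F i $ k) (i, k) = P i $ k + fps_X *
      (\<Sum>(j, l, a)\<in>{..<d} \<times> {..L} \<times> {..k}. Q i j l $ a * (\<lambda>(i, k). F i $ k) (j, k - a + l))"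
    by simp
qed

section \<open>A finite grammar for the coefficients\<close>

text \<open>For a threshold \<open>H\<close>, \<open>Coef i k\<close> (\<open>k < H\<close>) stands for \<open>F(i,k)\<close> and \<open>Exit i s j r\<close>
  (\<open>s \<le> L\<close>) for the first-exit series \<open>V(i,s,j,r)\<close>, i.e. \<^const>\<open>exit_gf\<close> from height \<open>s\<close> with
  step weights given by the exits from height \<open>0\<close> after one step of the system (\<open>step_expr\<close>).\<close>

datatype gvar = Coef nat nat | Exit nat nat nat nat

definition grammar_vars :: "nat \<Rightarrow> nat \<Rightarrow> nat \<Rightarrow> nat \<Rightarrow> gvar set" where
  "grammar_vars d L N H = {Coef i k | i k. i < d \<and> k < H} \<union>
     {Exit i s j r | i s j r. i < d \<and> s \<le> L \<and> j < d \<and> r \<in> {1..N}}"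

lemma Coef_in_grammar_vars [simp]: "Coef i k \<in> grammar_vars d L N H \<longleftrightarrow> i < d \<and> k < H"
  by (simp add: grammar_vars_def)

lemma Exit_in_grammar_vars [simp]:
  "Exit i s j r \<in> grammar_vars d L N H \<longleftrightarrow> i < d \<and> s \<le> L \<and> j < d \<and> r \<in> {1..N}"
  by (auto simp: grammar_vars_def)

lemma finite_grammar_vars: "finite (grammar_vars d L N H)"
proof -
  have "grammar_vars d L N H \<subseteq> (\<lambda>(i, k). Coef i k) ` ({..<d} \<times> {..<H}) \<union>
      (\<lambda>(i, s, j, r). Exit i s j r) ` ({..<d} \<times> {..L} \<times> {..<d} \<times> {1..N})"
    by (auto simp: grammar_vars_def image_iff)
  then show ?thesis
    by (rule finite_subset) auto
qed

definition exit_expr :: "nat \<Rightarrow> int \<Rightarrow> nat \<Rightarrow> nat \<Rightarrow> gvar pexp" where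
  "exit_expr i t j r = (if 0 \<le> t then PV (Exit i (nat t) j r)
     else if i = j \<and> t = - int r then PC 1 0 else PC 0 0)"

definition step_expr ::
    "(nat \<Rightarrow> nat \<Rightarrow> nat \<Rightarrow> real fps fps) \<Rightarrow> nat \<Rightarrow> nat \<Rightarrow> nat \<Rightarrow> nat \<Rightarrow> nat \<Rightarrow> nat \<Rightarrow> gvar pexp"
  where "step_expr Q d L N i i' r' = PX (psum ({..<d} \<times> {..L} \<times> {..N})
     (\<lambda>(i'', l, a). PMul (PC (Q i i'' l $ a) N) (exit_expr i'' (int l - int a) i' r')))"

definition high_coef_expr :: "nat \<Rightarrow> nat \<Rightarrow> nat \<Rightarrow> nat \<Rightarrow> nat \<Rightarrow> gvar pexp" where
  "high_coef_expr d N H j n = (if n < H then PV (Coef j n)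
     else psum ({..<d} \<times> {1..N}) (\<lambda>(j', r). PMul (PV (Exit j (n - H) j' r)) (PV (Coef j' (H - r)))))"

fun grammar_eq :: "(nat \<Rightarrow> real fps fps) \<Rightarrow> (nat \<Rightarrow> nat \<Rightarrow> nat \<Rightarrow> real fps fps) \<Rightarrow>
    nat \<Rightarrow> nat \<Rightarrow> nat \<Rightarrow> nat \<Rightarrow> gvar \<Rightarrow> gvar pexp"
  where
    "grammar_eq P Q d L N H (Coef i k) =
      psubst (\<lambda>(j, n). high_coef_expr d N H j n) (coeff_expr P Q d L N i k)"
  | "grammar_eq P Q d L N H (Exit i s j r) = psum ({..<d} \<times> {1..N})
      (\<lambda>(i', r'). PMul (step_expr Q d L N i i' r') (exit_expr i' (int s - int r') j r))"

lemma peval_exit_expr: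
  "peval f (exit_expr i t j r) = (if 0 \<le> t then f (Exit i (nat t) j r) else if i = j \<and> t = - int r then 1 else 0)"
  by (simp add: exit_expr_def)

lemma nonneg_coeffs_exit_expr [simp]: "nonneg_coeffs (exit_expr i t j r)"
  by (simp add: exit_expr_def)

lemma pvars_exit_expr:
  "i < d \<Longrightarrow> j < d \<Longrightarrow> r \<in> {1..N} \<Longrightarrow> t \<le> int L \<Longrightarrow>
     pvars (exit_expr i t j r) \<subseteq> grammar_vars d L N H"
  by (auto simp: exit_expr_def)

lemma step_expr_props:
  assumes "\<forall>i<d. \<forall>j<d. \<forall>l\<le>L. nonneg_bipoly (Q i j l)" "i < d" "i' < d" "r' \<in> {1..N}"
  shows "has_x_factor (step_expr Q d L N i i' r')"
    "nonneg_coeffs (step_expr Q d L N i i' r')"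
    "pvars (step_expr Q d L N i i' r') \<subseteq> grammar_vars d L N H"
proof -
  have "pvars (exit_expr i'' (int l - int a) i' r') \<subseteq> grammar_vars d L N H"
    if "i'' < d" "l \<le> L" for i'' l a
    using that assms by (intro pvars_exit_expr) auto
  then show "has_x_factor (step_expr Q d L N i i' r')"
    "nonneg_coeffs (step_expr Q d L N i i' r')"
    "pvars (step_expr Q d L N i i' r') \<subseteq> grammar_vars d L N H"
    using assms by (auto simp: step_expr_def psum_simps nonneg_bipoly_def) blast
qed

lemma grammar_eq_props:
  assumes "\<forall>i<d. nonneg_bipoly (P i)" "\<forall>i<d. \<forall>j<d. \<forall>l\<le>L. nonneg_bipoly (Q i j l)"
    and "v \<in> grammar_vars d L N H" "N < H"
  shows "guarded (grammar_eq P Q d L N H v) \<and> nonneg_coeffs (grammar_eq P Q d L N H v) \<and>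
    pvars (grammar_eq P Q d L N H v) \<subseteq> grammar_vars d L N H"
  using assms(3)
proof (cases v)
  case (Coef i k)
  with assms(3) have "i < d" "k < H"
    by auto
  let ?\<sigma> = "\<lambda>(j, n). high_coef_expr d N H j n"
  have \<sigma>_props: "nonneg_coeffs (?\<sigma> u) \<and> pvars (?\<sigma> u) \<subseteq> grammar_vars d L N H"
    if "u \<in> pvars (coeff_expr P Q d L N i k)" for u
  proof -
    obtain j n where "u = (j, n)" "j < d" "n < H + L"
      using \<open>u \<in> pvars (coeff_expr P Q d L N i k)\<close> \<open>k < H\<close> by (auto simp: pvars_coeff_expr)
    then show ?thesis
      using \<open>N < H\<close> by (auto simp: high_coef_expr_def psum_simps)
  qed
  have "nonneg_coeffs (coeff_expr P Q d L N i k)"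
    using assms(1,2) \<open>i < d\<close> by (auto simp: coeff_expr_def psum_simps nonneg_bipoly_def)
  then have "nonneg_coeffs (psubst ?\<sigma> (coeff_expr P Q d L N i k))"
    by (rule nonneg_coeffs_psubst) (use \<sigma>_props in blast)
  moreover have "pvars (psubst ?\<sigma> (coeff_expr P Q d L N i k)) \<subseteq> grammar_vars d L N H"
    unfolding pvars_psubst using \<sigma>_props by blast
  ultimately show ?thesis
    using Coef by (simp add: guarded_psubst guarded_coeff_expr)
next
  case (Exit i s j r)
  with assms(3) have "i < d" "s \<le> L" "j < d" "r \<in> {1..N}"
    by auto
  let ?g = "\<lambda>(i', r'). PMul (step_expr Q d L N i i' r') (exit_expr i' (int s - int r') j r)"
  have "guarded (?g x) \<and> nonneg_coeffs (?g x) \<and> pvars (?g x) \<subseteq> grammar_vars d L N H"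
    if "x \<in> {..<d} \<times> {1..N}" for x
  proof -
    obtain i' r' where x: "x = (i', r')" "i' < d" "r' \<in> {1..N}"
      using \<open>x \<in> {..<d} \<times> {1..N}\<close> by auto
    have "pvars (exit_expr i' (int s - int r') j r) \<subseteq> grammar_vars d L N H"
      using x \<open>j < d\<close> \<open>r \<in> {1..N}\<close> \<open>s \<le> L\<close> by (intro pvars_exit_expr) auto
    then show ?thesis
      using step_expr_props[OF assms(2) \<open>i < d\<close> x(2,3)] x(1) by simp
  qed
  then show ?thesis
    using Exit by (simp add: psum_simps ball_conj_distrib UN_subset_iff)
qed

locale grammar_solution =
  fixes P :: "nat \<Rightarrow> real fps fps" and Q :: "nat \<Rightarrow> nat \<Rightarrow> nat \<Rightarrow> real fps fps"
    and d L N H :: nat and val :: "gvar \<Rightarrow> real fps"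
  assumes P_degree: "\<forall>i<d. bipoly_degree_le N (P i)"
    and Q_degree: "\<forall>i<d. \<forall>j<d. \<forall>l\<le>L. bipoly_degree_le N (Q i j l)"
    and N_less_H: "N < H"
    and solves: "\<And>v. v \<in> grammar_vars d L N H \<Longrightarrow> val v = peval val (grammar_eq P Q d L N H v)"
begin

definition step_gf :: "nat \<Rightarrow> nat \<Rightarrow> nat \<Rightarrow> real fps" where
  "step_gf i i' r' = peval val (step_expr Q d L N i i' r')"

abbreviation exits :: "int \<Rightarrow> nat \<Rightarrow> nat \<Rightarrow> nat \<Rightarrow> real fps" where
  "exits \<equiv> exit_gf step_gf d N"

definition coeff_extension :: "nat \<times> nat \<Rightarrow> real fps" where
  "coeff_extension = (\<lambda>(i, n). if n < H then val (Coef i n)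
     else (\<Sum>(j, r)\<in>{..<d} \<times> {1..N}. exits (int n - int H) i j r * val (Coef j (H - r))))"

lemma exits_eq_Exit:
  assumes "s \<le> L" "i < d" "j < d" "r \<in> {1..N}"
  shows "exits (int s) i j r = val (Exit i s j r)"
  using assms
proof (induction s arbitrary: i rule: less_induct)
  case (less s)
  have "exits (int s) i j r =
      (\<Sum>(i', r')\<in>{..<d} \<times> {1..N}. step_gf i i' r' * exits (int s - int r') i' j r)"
    by (simp add: exit_gf_nonneg)
  also have "\<dots> = (\<Sum>(i', r')\<in>{..<d} \<times> {1..N}.
      step_gf i i' r' * peval val (exit_expr i' (int s - int r') j r))"
  proof (intro sum.cong refl, clarify)
    fix i' r' assume "i' < d" "r' \<in> {1..N}"
    then show "step_gf i i' r' * exits (int s - int r') i' j r =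
        step_gf i i' r' * peval val (exit_expr i' (int s - int r') j r)"
    proof (cases "r' \<le> s")
      case True
      have "exits (int (s - r')) i' j r = val (Exit i' (s - r') j r)"
        using less True \<open>i' < d\<close> \<open>r' \<in> {1..N}\<close> by (intro less.IH) auto
      then show ?thesis
        using True by (simp add: peval_exit_expr nat_diff_distrib)
    qed (simp add: peval_exit_expr exit_gf_neg)
  qed
  also have "\<dots> = val (Exit i s j r)"
    using solves[of "Exit i s j r"] less.prems by (simp add: psum_simps step_gf_def split_def)
  finally show ?case .
qed

lemma exits_eq_peval_exit_expr:
  "t \<le> int L \<Longrightarrow> i < d \<Longrightarrow> j < d \<Longrightarrow> r \<in> {1..N} \<Longrightarrow>
     exits t i j r = peval val (exit_expr i t j r)"
  using exits_eq_Exit[of "nat t" i j r] by (auto simp: peval_exit_expr exit_gf_neg)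

lemma step_gf_first_passage:
  assumes "i < d" "i' < d" "r' \<in> {1..N}"
  shows "step_gf i i' r' = (\<Sum>(i'', l, a)\<in>{..<d} \<times> {..L} \<times> {..N}.
    fps_X * Q i i'' l $ a * exits (int l - int a) i'' i' r')"
proof -
  have "step_gf i i' r' = fps_X * (\<Sum>(i'', l, a)\<in>{..<d} \<times> {..L} \<times> {..N}.
      Q i i'' l $ a * peval val (exit_expr i'' (int l - int a) i' r'))"
    using assms Q_degree
    by (auto simp: step_gf_def step_expr_def psum_simps bipoly_degree_le_coeff intro!: sum.cong)
  also have "\<dots> = fps_X * (\<Sum>(i'', l, a)\<in>{..<d} \<times> {..L} \<times> {..N}.
      Q i i'' l $ a * exits (int l - int a) i'' i' r')"
    using assms by (auto simp: exits_eq_peval_exit_expr intro!: sum.cong)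
  finally show ?thesis
    by (simp add: sum_distrib_left split_def mult.assoc)
qed

lemma exits_first_step:
  assumes "0 \<le> s" "i < d"
  shows "exits s i j r = (\<Sum>(i'', l, a)\<in>{..<d} \<times> {..L} \<times> {..N}.
    fps_X * Q i i'' l $ a * exits (int l - int a + s) i'' j r)"
  using exit_gf_first_step[where w = "\<lambda>(i'', l, a). fps_X * Q i i'' l $ a"
      and h = "\<lambda>(i'', l, a). int l - int a" and st = "\<lambda>(i'', l, a). i''"]
    step_gf_first_passage assms
  by (force simp: split_def)

lemma coeff_extension_eq_sum_exits:
  assumes "H \<le> n + N" "i < d"
  shows "coeff_extension (i, n) =
    (\<Sum>(j, r)\<in>{..<d} \<times> {1..N}. exits (int n - int H) i j r * val (Coef j (H - r)))"
proof (cases "n < H")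
  case True
  then have "int n - int H < 0" "nat (- (int n - int H)) = H - n" "H - (H - n) = n"
    by auto
  then show ?thesis
    using True assms sum_exit_gf_neg[where g = "\<lambda>j r. val (Coef j (H - r))"] by (simp add: coeff_extension_def)
qed (simp add: coeff_extension_def)

lemma peval_high_coef_expr:
  assumes "j < d" "n < H + L"
  shows "peval val (high_coef_expr d N H j n) = coeff_extension (j, n)"
proof (cases "n < H")
  case False
  then have "exits (int n - int H) j j' r = val (Exit j (n - H) j' r)" if "j' < d" "r \<in> {1..N}" for j' r
    using assms that exits_eq_Exit[of "n - H" j j' r] by (simp add: of_nat_diff)
  then show ?thesis
    using False by (auto simp: high_coef_expr_def coeff_extension_def psum_simps intro!: sum.cong)
qed (simp add: high_coef_expr_def coeff_extension_def)

lemma coeff_extension_eq_low: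
  assumes "i < d" "k < H"
  shows "coeff_extension (i, k) = P i $ k + fps_X *
    (\<Sum>(j, l, a)\<in>{..<d} \<times> {..L} \<times> {..k}. Q i j l $ a * coeff_extension (j, k - a + l))"
proof -
  let ?\<sigma> = "\<lambda>(j, n). high_coef_expr d N H j n"
  have "coeff_extension (i, k) = peval (\<lambda>v. peval val (?\<sigma> v)) (coeff_expr P Q d L N i k)"
    using solves[of "Coef i k"] assms by (simp add: coeff_extension_def peval_psubst)
  also have "\<dots> = peval coeff_extension (coeff_expr P Q d L N i k)"
  proof (rule peval_cong)
    fix v assume "v \<in> pvars (coeff_expr P Q d L N i k)"
    then obtain j n where "v = (j, n)" "j < d" "n < H + L"
      using \<open>k < H\<close> by (auto simp: pvars_coeff_expr)
    then show "peval val (?\<sigma> v) = coeff_extension v"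
      by (simp add: peval_high_coef_expr)
  qed
  finally show ?thesis
    using assms P_degree Q_degree by (simp add: peval_coeff_expr)
qed

lemma coeff_extension_eq_high:
  assumes "i < d" "H \<le> k"
  shows "coeff_extension (i, k) = P i $ k + fps_X *
    (\<Sum>(j, l, a)\<in>{..<d} \<times> {..L} \<times> {..k}. Q i j l $ a * coeff_extension (j, k - a + l))"
proof -
  let ?D = "{..<d} \<times> {1..N}" and ?Y = "{..<d} \<times> {..L} \<times> {..N}"
  let ?low = "\<lambda>j r. val (Coef j (H - r))"
  have "coeff_extension (i, k) = (\<Sum>(j', r)\<in>?D. exits (int k - int H) i j' r * ?low j' r)"
    using assms by (simp add: coeff_extension_def)
  also have "\<dots> = (\<Sum>(j', r)\<in>?D. \<Sum>(i'', l, a)\<in>?Y.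
      fps_X * Q i i'' l $ a * (exits (int l - int a + (int k - int H)) i'' j' r * ?low j' r))"
  proof -
    have "exits (int k - int H) i j' r = (\<Sum>(i'', l, a)\<in>?Y.
        fps_X * Q i i'' l $ a * exits (int l - int a + (int k - int H)) i'' j' r)" for j' r
      using assms by (intro exits_first_step) auto
    then show ?thesis
      by (simp only: sum_distrib_right mult.assoc split_def)
  qed
  also have "\<dots> = (\<Sum>(i'', l, a)\<in>?Y. fps_X * Q i i'' l $ a *
      (\<Sum>(j', r)\<in>?D. exits (int l - int a + (int k - int H)) i'' j' r * ?low j' r))"
    unfolding sum_distrib_left split_def by (rule sum.swap)
  also have "\<dots> = (\<Sum>(i'', l, a)\<in>?Y. fps_X * Q i i'' l $ a * coeff_extension (i'', k - a + l))"
  proof (intro sum.cong refl, clarify)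
    fix i'' l a assume "i'' < d" "l \<le> L" "a \<le> N"
    then have shift: "int l - int a + (int k - int H) = int (k - a + l) - int H"
      using assms N_less_H by auto
    have "coeff_extension (i'', k - a + l) =
        (\<Sum>(j', r)\<in>?D. exits (int (k - a + l) - int H) i'' j' r * ?low j' r)"
      using assms N_less_H \<open>i'' < d\<close> \<open>a \<le> N\<close> by (intro coeff_extension_eq_sum_exits) auto
    then show "fps_X * Q i i'' l $ a *
        (\<Sum>(j', r)\<in>?D. exits (int l - int a + (int k - int H)) i'' j' r * ?low j' r) =
        fps_X * Q i i'' l $ a * coeff_extension (i'', k - a + l)"
      by (simp only: shift)
  qed
  also have "\<dots> = fps_X * (\<Sum>(j, l, a)\<in>?Y. Q i j l $ a * coeff_extension (j, k - a + l))"
    by (simp add: sum_distrib_left split_def mult.assoc)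
  also have "(\<Sum>(j, l, a)\<in>?Y. Q i j l $ a * coeff_extension (j, k - a + l)) =
      (\<Sum>(j, l, a)\<in>{..<d} \<times> {..L} \<times> {..k}. Q i j l $ a * coeff_extension (j, k - a + l))"
  proof (rule sum.mono_neutral_left)
    show "\<forall>y\<in>{..<d} \<times> {..L} \<times> {..k} - ?Y.
        (case y of (j, l, a) \<Rightarrow> Q i j l $ a * coeff_extension (j, k - a + l)) = 0"
    proof
      fix y assume "y \<in> {..<d} \<times> {..L} \<times> {..k} - ?Y"
      then obtain j l a where "y = (j, l, a)" "j < d" "l \<le> L" "\<not> a \<le> N"
        by auto
      moreover have "Q i j l $ a = 0"
        using Q_degree assms(1) \<open>j < d\<close> \<open>l \<le> L\<close> \<open>\<not> a \<le> N\<close>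
        by (intro bipoly_degree_le_nth_eq_0) auto
      ultimately show "(case y of (j, l, a) \<Rightarrow> Q i j l $ a * coeff_extension (j, k - a + l)) = 0"
        by simp
    qed
  qed (use assms N_less_H in auto)
  finally have "coeff_extension (i, k) = fps_X *
      (\<Sum>(j, l, a)\<in>{..<d} \<times> {..L} \<times> {..k}. Q i j l $ a * coeff_extension (j, k - a + l))" .
  moreover have "P i $ k = 0"
    using assms P_degree N_less_H by (intro bipoly_degree_le_nth_eq_0) auto
  ultimately show ?thesis
    by simp
qed

lemma solves_coeff_system_coeff_extension: "solves_coeff_system P Q d L coeff_extension"
  unfolding solves_coeff_system_def
proof (intro allI impI)
  fix i k assume "i < d"
  then show "coeff_extension (i, k) = P i $ k + fps_X *
      (\<Sum>(j, l, a)\<in>{..<d} \<times> {..L} \<times> {..k}. Q i j l $ a * coeff_extension (j, k - a + l))"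
    using coeff_extension_eq_low coeff_extension_eq_high by (cases "k < H") simp_all
qed

end

lemma finite_grammar_coeff_system_solution:
  assumes "\<forall>i<d. nonneg_bipoly (P i)" "\<forall>i<d. \<forall>j<d. \<forall>l\<le>L. nonneg_bipoly (Q i j l)"
    and "\<forall>i<d. bipoly_degree_le N (P i)" "\<forall>i<d. \<forall>j<d. \<forall>l\<le>L. bipoly_degree_le N (Q i j l)"
    and "solves_coeff_system P Q d L f" "i < d"
  shows "finite_grammar (f (i, k))"
proof -
  define H where "H = Suc (max N k)"
  have "N < H" "k < H"
    by (auto simp: H_def)
  have eqs: "\<forall>v\<in>grammar_vars d L N H. guarded (grammar_eq P Q d L N H v) \<and>
      nonneg_coeffs (grammar_eq P Q d L N H v) \<and> pvars (grammar_eq P Q d L N H v) \<subseteq> grammar_vars d L N H"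
    using grammar_eq_props[OF assms(1,2) _ \<open>N < H\<close>] by blast
  then obtain val where val: "\<forall>v\<in>grammar_vars d L N H. val v = peval val (grammar_eq P Q d L N H v)"
    using guarded_system_solvable[of "grammar_vars d L N H" "grammar_eq P Q d L N H"] by blast
  interpret grammar_solution P Q d L N H val
    using assms(3,4) \<open>N < H\<close> val by unfold_locales auto
  have "f (i, k) = coeff_extension (i, k)"
    using assms(3,4,5) solves_coeff_system_coeff_extension \<open>i < d\<close> by (rule coeff_system_unique)
  also have "\<dots> = val (Coef i k)"
    using \<open>k < H\<close> by (simp add: coeff_extension_def)
  finally have "f (i, k) = val (Coef i k)" .
  moreover have "finite_grammar (val (Coef i k))"
    using finite_grammar_vars _ eqs val
    by (rule finite_grammar_of_guarded_system) (use \<open>i < d\<close> \<open>k < H\<close> in simp)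
  ultimately show ?thesis
    by simp
qed

theorem theorem1:
  fixes d L :: nat
    and P :: "nat \<Rightarrow> real fps fps"
    and Q :: "nat \<Rightarrow> nat \<Rightarrow> nat \<Rightarrow> real fps fps"
    and F :: "nat \<Rightarrow> real fps fps"
  assumes "d \<ge> 1" and "L \<ge> 1"
    and "\<forall>i<d. nonneg_bipoly (P i)"
    and "\<forall>i<d. \<forall>j<d. \<forall>l\<le>L. nonneg_bipoly (Q i j l)"
    and "\<forall>i<d. F i = P i + fps_const fps_X *
            (\<Sum>j<d. \<Sum>l\<le>L. Q i j l * Delta l (F j))"
  shows "\<forall>i<d. \<forall>k. finite_grammar (fps_nth (F i) k)"
proof (intro allI impI)
  fix i k assume "i < d"
  obtain N1 where N1: "\<forall>i\<in>{..<d}. bipoly_degree_le N1 (P i)"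
    using nonneg_bipolys_degree_le[of "{..<d}" P] assms(3) by auto
  obtain N2 where N2: "\<forall>(i, j, l)\<in>{..<d} \<times> {..<d} \<times> {..L}. bipoly_degree_le N2 (Q i j l)"
    using nonneg_bipolys_degree_le[of "{..<d} \<times> {..<d} \<times> {..L}" "\<lambda>(i, j, l). Q i j l"] assms(4)
    by auto
  have "\<forall>i<d. bipoly_degree_le (max N1 N2) (P i)"
    "\<forall>i<d. \<forall>j<d. \<forall>l\<le>L. bipoly_degree_le (max N1 N2) (Q i j l)"
    using N1 N2 bipoly_degree_le_mono[of N1 _ "max N1 N2"] bipoly_degree_le_mono[of N2 _ "max N1 N2"]
    by auto
  moreover have "solves_coeff_system P Q d L (\<lambda>(i, k). F i $ k)"
    using assms(5) by (rule solves_coeff_system_coeffs)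
  ultimately have "finite_grammar ((\<lambda>(i, k). F i $ k) (i, k))"
    using assms(3,4) \<open>i < d\<close> by (intro finite_grammar_coeff_system_solution)
  then show "finite_grammar (fps_nth (F i) k)"
    by simp
qed

end
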